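(* Let $(\tau,T)$ be a dynamic pricing process with $P(\tau<\infty)=1$. Then $(\tau,T)$ is DIR compatible if and only if \[\lambda\int_0^\infty w_-\big(P(T(\tau)-s>y\mid T(\tau)>s)\big)dy\le\theta\quad\text{for all } s \text{ with } P(T(\tau)>s)>0.\]
   Context: Standing assumptions: $\theta>0$, $\lambda>0$; $w_+,w_-:[0,1]\to[0,1]$ strictly increasing, thrice differentiable, $w_\pm(0)=0$, $w_\pm(1)=1$, $w_\pm'(0)>1$, $w_\pm'(1)>1$, $w_\pm'''>0$. A cumulative payment function is $T:\mathbb{R}^+\to\mathbb{R}^+$ of the form $T(t)=\int_0^tf(s)ds+\sum_i1_{t_i<t}T_i$, with $f\ge0$ integrable and $(t_i),(T_i)$ countable sequences of nonnegative numbers, $t_i$ increasing. A stopping time is a random variable $\tau\in[0,\infty]$ whose CDF is the sum of a nondecreasing nonnegative absolutely continuous function and a nondecreasing nonnegative jump function. A dynamic pricing process is a pair $(\tau,T)$; it is DIR compatible if for every $s$ with $P(\tau>s)>0$, \[\theta\,w_+(P(\tau<\infty\mid\tau>s))-\lambda\int_0^\infty w_-\big(P(T(\tau)-T(s)>y\mid\tau>s)\big)dy\ge0.\] *)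

theory Defs
  imports "HOL-Probability.Probability"
begin

definition prob_weight :: "(real \<Rightarrow> real) \<Rightarrow> bool" where
  "prob_weight w \<longleftrightarrow>
     strict_mono_on {0..1} w \<and> w ` {0..1} \<subseteq> {0..1} \<and> w 0 = 0 \<and> w 1 = 1 \<and>
     (\<exists>w1 w2 w3.
        (\<forall>x\<in>{0..1}. (w has_real_derivative w1 x) (at x within {0..1}) \<and>
                     (w1 has_real_derivative w2 x) (at x within {0..1}) \<and>
                     (w2 has_real_derivative w3 x) (at x within {0..1}) \<and>
                     w3 x > 0) \<and>
        w1 0 > 1 \<and> w1 1 > 1)"

definition cumulative_payment :: "(real \<Rightarrow> real) \<Rightarrow> bool" where
  "cumulative_payment T \<longleftrightarrow>
     (\<exists>f tt TT. (\<forall>s\<ge>0. f s \<ge> 0) \<and> set_integrable lborel {0..} f \<and>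
        (\<forall>i. tt i \<ge> 0 \<and> TT i \<ge> 0) \<and> mono tt \<and>
        (\<forall>t\<ge>0. (\<lambda>i. if tt i < t then TT i else 0) sums (T t - (LINT s:{0..t}|lborel. f s))))"

definition pricing_stopping_time :: "'a measure \<Rightarrow> ('a \<Rightarrow> ennreal) \<Rightarrow> bool" where
  "pricing_stopping_time M \<tau> \<longleftrightarrow>
     \<tau> \<in> borel_measurable M \<and>
     (\<exists>g s j. (\<forall>x\<ge>0. g x \<ge> 0) \<and> (\<forall>t\<ge>0. set_integrable lborel {0..t} g) \<and>
        (\<forall>i. s i \<ge> 0 \<and> j i \<ge> 0) \<and>
        (\<forall>t\<ge>0. (\<lambda>i. if s i \<le> t then j i else (0::real)) sums
              (measure M {x\<in>space M. \<tau> x \<le> ennreal t} - (LINT x:{0..t}|lborel. g x))))"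

definition payment_at :: "(real \<Rightarrow> real) \<Rightarrow> ennreal \<Rightarrow> ereal" where
  "payment_at T t = (if t = \<infinity> then (SUP r\<in>{0..}. ereal (T r)) else ereal (T (enn2real t)))"

definition cond_prob :: "'a measure \<Rightarrow> 'a set \<Rightarrow> 'a set \<Rightarrow> real" where
  "cond_prob M A B = measure M (A \<inter> B) / measure M B"

definition DIR_compatible ::
  "'a measure \<Rightarrow> real \<Rightarrow> real \<Rightarrow> (real \<Rightarrow> real) \<Rightarrow> (real \<Rightarrow> real) \<Rightarrow> ('a \<Rightarrow> ennreal) \<Rightarrow> (real \<Rightarrow> real) \<Rightarrow> bool" where
  "DIR_compatible M \<theta> lam wp wm \<tau> T \<longleftrightarrow>
     (\<forall>s\<ge>0. measure M {x\<in>space M. \<tau> x > ennreal s} > 0 \<longrightarrow>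
        ennreal lam * (\<integral>\<^sup>+ y\<in>{0..}. ennreal (wm (cond_prob M
              {x\<in>space M. payment_at T (\<tau> x) - ereal (T s) > ereal y}
              {x\<in>space M. \<tau> x > ennreal s})) \<partial>lborel)
        \<le> ennreal (\<theta> * wp (cond_prob M {x\<in>space M. \<tau> x < \<infinity>} {x\<in>space M. \<tau> x > ennreal s})))"

end

theory Submission
  imports Defs
begin

(* A cumulative payment T is nondecreasing and left-continuous (the lump sum T_i is paid strictly
   after t_i), so every level c that T(\<tau>) exceeds with positive probability is crossed at a time t
   with T t <= c < T u for all u > t; then the level event {T(\<tau>) > c} is the stopping event
   {\<tau> > t}, and the excess over c is at most the excess over T t. Conversely {T(\<tau>) > T s} is
   contained in {\<tau> > s}, and conditioning the excess over T s on the smaller event only raises its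
   weighted tail probabilities. Since P(\<tau> < \<infinity>) = 1, the gain term of DIR compatibility is just
   \<theta>, so both conditions bound weighted (Choquet) integrals of excesses, over stopping events and
   over level events respectively. *)

lemma cumulative_payment_decomp:
  assumes "cumulative_payment T"
  obtains f tt TT where "\<And>s. 0 \<le> s \<Longrightarrow> 0 \<le> f s" "\<And>t. f integrable_on {0..t}"
    "\<And>i. 0 \<le> tt i" "\<And>i. 0 \<le> TT i"
    "\<And>t. 0 \<le> t \<Longrightarrow> (\<lambda>i. if tt i < t then TT i else 0) sums (T t - integral {0..t} f)"
proof -
  obtain f tt TT where f: "\<forall>s\<ge>0. 0 \<le> f s" "set_integrable lborel {0..} f"
    and jumps_nonneg: "\<forall>i. 0 \<le> tt i \<and> 0 \<le> TT i"
    and jumps: "\<forall>t\<ge>0. (\<lambda>i. if tt i < t then TT i else 0) sums (T t - (LINT s:{0..t}|lborel. f s))"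
    using assms unfolding cumulative_payment_def by blast
  have f_int: "set_integrable lborel {0..t} f" for t
    by (rule set_integrable_subset[OF f(2)]) auto
  show ?thesis
  proof
    show "f integrable_on {0..t}" for t
      using set_borel_integral_eq_integral(1)[OF f_int] .
    show "(\<lambda>i. if tt i < t then TT i else 0) sums (T t - integral {0..t} f)" if "0 \<le> t" for t
      using jumps that set_borel_integral_eq_integral(2)[OF f_int] by auto
  qed (use f jumps_nonneg in auto)
qed

lemma cumulative_payment_zero:
  assumes "cumulative_payment T"
  shows "T 0 = 0"
proof -
  obtain f tt TT where tt: "\<And>i. 0 \<le> tt i"
    and jumps: "\<And>t. 0 \<le> t \<Longrightarrow> (\<lambda>i. if tt i < t then TT i else 0) sums (T t - integral {0..t} f)"
    by (rule cumulative_payment_decomp[OF assms]) blast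
  have "(\<lambda>i. if tt i < 0 then TT i else 0) = (\<lambda>i. 0)"
    using tt by (auto simp: fun_eq_iff dest: leD)
  then have "(\<lambda>i. 0) sums T 0"
    using jumps[of 0] by simp
  then show ?thesis
    using sums_zero sums_unique2 by blast
qed

lemma cumulative_payment_mono:
  assumes "cumulative_payment T"
  shows "mono_on {0..} T"
proof (rule mono_onI)
  fix a b :: real
  assume "a \<in> {0..}" "b \<in> {0..}" "a \<le> b"
  then have ab: "0 \<le> a" "a \<le> b" by auto
  obtain f tt TT where f: "\<And>s. 0 \<le> s \<Longrightarrow> 0 \<le> f s" "\<And>t. f integrable_on {0..t}"
    and TT: "\<And>i. 0 \<le> TT i"
    and jumps: "\<And>t. 0 \<le> t \<Longrightarrow> (\<lambda>i. if tt i < t then TT i else 0) sums (T t - integral {0..t} f)"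
    by (rule cumulative_payment_decomp[OF assms]) blast
  have "T a - integral {0..a} f \<le> T b - integral {0..b} f"
    by (rule sums_le[OF _ jumps jumps]) (use ab TT in auto)
  moreover have "integral {0..b} f = integral {0..a} f + integral {a..b} f"
    using Henstock_Kurzweil_Integration.integral_combine[OF ab f(2)] by simp
  moreover have "0 \<le> integral {a..b} f"
    using ab by (intro integral_nonneg integrable_subinterval_real[OF f(2)[of b]] f(1)) auto
  ultimately show "T a \<le> T b"
    by linarith
qed

lemma tendsto_at_left_jump_sum:
  fixes tt TT :: "nat \<Rightarrow> real" and t :: real
  assumes "\<And>i. 0 \<le> TT i" and "summable (\<lambda>i. if tt i < t then TT i else 0)"
  shows "((\<lambda>u. \<Sum>i. if tt i < u then TT i else 0) \<longlongrightarrow> (\<Sum>i. if tt i < t then TT i else 0)) (at_left t)"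
proof -
  define J where "J u = (\<lambda>i. if tt i < u then TT i else 0)" for u
  have "\<forall>\<^sub>F u in at_left t. J u i = J t i" for i
  proof (cases "tt i < t")
    case True
    show ?thesis
      by (rule eventually_mono[OF eventually_at_left_real[OF True]]) (auto simp: J_def)
  next
    case False
    show ?thesis
      by (rule eventually_mono[OF eventually_at_left_real[of "t - 1" t]]) (use False in \<open>auto simp: J_def\<close>)
  qed
  then have "((\<lambda>u. J u i) \<longlongrightarrow> J t i) (at_left t)" for i
    by (rule tendsto_eventually)
  moreover have "\<forall>\<^sub>F (i, u) in sequentially \<times>\<^sub>F at_left t. norm (J u i) \<le> J t i"
    by (rule eventually_mono[OF eventually_prodI[OF always_eventually eventually_at_left_real[of "t - 1" t]]])
      (auto simp: J_def assms(1))
  moreover have "summable (J t)"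
    using assms(2) by (simp add: J_def)
  ultimately have "((\<lambda>u. \<Sum>i. J u i) \<longlongrightarrow> (\<Sum>i. J t i)) (at_left t)"
    using tannerys_theorem[of "\<lambda>i u. J u i" "J t" "at_left t" "J t"] by simp
  then show ?thesis
    by (simp add: J_def)
qed

lemma cumulative_payment_tendsto_at_left:
  assumes "cumulative_payment T" and "0 < t"
  shows "(T \<longlongrightarrow> T t) (at_left t)"
proof -
  obtain f tt TT where f: "\<And>t. f integrable_on {0..t}" and TT: "\<And>i. 0 \<le> TT i"
    and jumps: "\<And>t. 0 \<le> t \<Longrightarrow> (\<lambda>i. if tt i < t then TT i else 0) sums (T t - integral {0..t} f)"
    by (rule cumulative_payment_decomp[OF assms(1)]) blast
  have T_eq: "T u = integral {0..u} f + (\<Sum>i. if tt i < u then TT i else 0)" if "0 \<le> u" for u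
    using sums_unique[OF jumps[OF that]] by simp
  have "((\<lambda>u. integral {0..u} f) \<longlongrightarrow> integral {0..t} f) (at_left t)"
    by (rule continuous_on_Icc_at_leftD[OF indefinite_integral_continuous_1[OF f] assms(2)])
  moreover have "((\<lambda>u. \<Sum>i. if tt i < u then TT i else 0) \<longlongrightarrow> (\<Sum>i. if tt i < t then TT i else 0)) (at_left t)"
    using TT sums_summable[OF jumps] assms(2) by (intro tendsto_at_left_jump_sum) auto
  ultimately have "((\<lambda>u. integral {0..u} f + (\<Sum>i. if tt i < u then TT i else 0)) \<longlongrightarrow> T t) (at_left t)"
    using T_eq[of t] assms(2) by (auto intro: tendsto_add)
  moreover have "\<forall>\<^sub>F u in at_left t. integral {0..u} f + (\<Sum>i. if tt i < u then TT i else 0) = T u"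
    by (rule eventually_mono[OF eventually_at_left_real[OF assms(2)]]) (simp add: T_eq)
  ultimately show ?thesis
    by (rule Lim_transform_eventually)
qed

lemma mono_left_continuous_crossing:
  fixes g :: "real \<Rightarrow> real"
  assumes mono: "mono_on {0..} g" and left_cont: "\<And>t. 0 < t \<Longrightarrow> (g \<longlongrightarrow> g t) (at_left t)"
    and "g 0 \<le> c" and "0 \<le> u\<^sub>0" and "c < g u\<^sub>0"
  obtains t where "0 \<le> t" "g t \<le> c" "\<And>u. t < u \<Longrightarrow> c < g u"
proof -
  define S where "S = {u. 0 \<le> u \<and> g u \<le> c}"
  have "0 \<in> S"
    using assms(3) by (simp add: S_def)
  have "u \<le> u\<^sub>0" if "u \<in> S" for u
    using that assms(4,5) mono_onD[OF mono, of u\<^sub>0 u] by (force simp: S_def)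
  then have "bdd_above S"
    by (rule bdd_aboveI)
  define t where "t = Sup S"
  have "0 \<le> t"
    unfolding t_def by (rule cSup_upper[OF \<open>0 \<in> S\<close> \<open>bdd_above S\<close>])
  have above: "c < g u" if "t < u" for u
    using that \<open>0 \<le> t\<close> cSup_upper[OF _ \<open>bdd_above S\<close>, of u] by (force simp: S_def t_def)
  have "g t \<le> c"
  proof (cases "t = 0")
    case True
    then show ?thesis using assms(3) by simp
  next
    case False
    with \<open>0 \<le> t\<close> have "0 < t" by simp
    have "g u \<le> c" if u: "u \<in> {0<..<t}" for u
    proof -
      obtain v where "v \<in> S" "u < v"
        using u less_cSup_iff[OF _ \<open>bdd_above S\<close>] \<open>0 \<in> S\<close> by (auto simp: t_def)
      then show ?thesis
        using u mono_onD[OF mono, of u v] by (auto simp: S_def)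
    qed
    then show ?thesis
      using tendsto_upperbound[OF left_cont[OF \<open>0 < t\<close>] eventually_mono[OF eventually_at_left_real[OF \<open>0 < t\<close>]]]
      by auto
  qed
  show ?thesis
    by (rule that[OF \<open>0 \<le> t\<close> \<open>g t \<le> c\<close> above])
qed

lemma payment_at_le:
  assumes "mono_on {0..} T" and "0 \<le> s" and "t \<le> ennreal s"
  shows "payment_at T t \<le> ereal (T s)"
proof -
  have "t \<noteq> \<infinity>"
    using assms(3) by (auto simp: top_unique)
  moreover have "enn2real t \<le> s"
    by (rule enn2real_leI[OF assms(2,3)])
  ultimately show ?thesis
    using mono_onD[OF assms(1)] by (simp add: payment_at_def)
qed

lemma payment_at_ge:
  assumes "mono_on {0..} T" and "0 \<le> r" and "ennreal r \<le> t"
  shows "ereal (T r) \<le> payment_at T t"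
proof (cases "t = \<infinity>")
  case True
  then show ?thesis
    using assms(2) by (auto simp: payment_at_def intro: SUP_upper)
next
  case False
  then have "r \<le> enn2real t"
    using enn2real_mono[OF assms(3)] False assms(2) by (simp add: less_top)
  then show ?thesis
    using False assms(2) mono_onD[OF assms(1)] by (simp add: payment_at_def)
qed

lemma payment_at_gtE:
  assumes "ereal c < payment_at T t"
  obtains u where "0 \<le> u" "c < T u"
proof (cases "t = \<infinity>")
  case True
  then show ?thesis
    using assms that by (auto simp: payment_at_def less_SUP_iff)
next
  case False
  then show ?thesis
    using assms that[of "enn2real t"] by (simp add: payment_at_def)
qed

lemma payment_at_gt_iff_crossing:
  assumes "mono_on {0..} T" and "0 \<le> t" and "T t \<le> c" and "\<And>u. t < u \<Longrightarrow> c < T u"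
  shows "ereal c < payment_at T \<sigma> \<longleftrightarrow> ennreal t < \<sigma>"
proof
  assume "ennreal t < \<sigma>"
  obtain r where "t < r" "ennreal r \<le> \<sigma>"
  proof (cases "\<sigma> = \<infinity>")
    case True
    then show ?thesis using that[of "t + 1"] by simp
  next
    case False
    then have "\<sigma> = ennreal (enn2real \<sigma>)"
      by (simp add: ennreal_enn2real_if)
    then show ?thesis
      using that[of "enn2real \<sigma>"] \<open>ennreal t < \<sigma>\<close> ennreal_less_iff[OF assms(2)] by fastforce
  qed
  then have "ereal (T r) \<le> payment_at T \<sigma>"
    using assms(2) by (intro payment_at_ge[OF assms(1)]) auto
  moreover have "ereal c < ereal (T r)"
    using assms(4) \<open>t < r\<close> by simp
  ultimately show "ereal c < payment_at T \<sigma>"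
    by (rule order.strict_trans2[rotated])
next
  assume "ereal c < payment_at T \<sigma>"
  show "ennreal t < \<sigma>"
  proof (rule ccontr)
    assume "\<not> ennreal t < \<sigma>"
    then have "payment_at T \<sigma> \<le> ereal (T t)"
      by (intro payment_at_le[OF assms(1,2)]) simp
    also have "\<dots> \<le> ereal c"
      using assms(3) by simp
    finally show False
      using \<open>ereal c < payment_at T \<sigma>\<close> by simp
  qed
qed

lemma measurable_payment_at:
  assumes "mono_on {0..} T" and [measurable]: "\<tau> \<in> borel_measurable M"
  shows "(\<lambda>x. payment_at T (\<tau> x)) \<in> borel_measurable M"
proof -
  have "mono (\<lambda>r. T (max r 0))"
    by (rule monoI) (auto intro!: mono_onD[OF assms(1)])
  then have [measurable]: "(\<lambda>r. T (max r 0)) \<in> borel_measurable borel"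
    by (rule borel_measurable_mono)
  have eq: "(\<lambda>x. payment_at T (\<tau> x)) = (\<lambda>x. if \<tau> x = \<infinity> then (SUP r\<in>{0..}. ereal (T r))
      else ereal (T (max (enn2real (\<tau> x)) 0)))"
    by (simp add: payment_at_def max_absorb1 fun_eq_iff)
  show ?thesis
    unfolding eq by measurable
qed

lemma cond_prob_nonneg: "0 \<le> cond_prob M A B"
  by (simp add: cond_prob_def)

lemma cond_prob_le_1:
  assumes "finite_measure M" and "B \<in> sets M"
  shows "cond_prob M A B \<le> 1"
proof (cases "measure M B = 0")
  case False
  then have "0 < measure M B"
    using measure_nonneg[of M B] by linarith
  then show ?thesis
    using finite_measure.finite_measure_mono[OF assms(1) Int_lower2 assms(2), of A]
    by (simp add: cond_prob_def)
qed (simp add: cond_prob_def)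

lemma cond_prob_mono:
  assumes "finite_measure M" and "A' \<in> sets M" and "B \<in> sets M" and "A \<subseteq> A'"
  shows "cond_prob M A B \<le> cond_prob M A' B"
  unfolding cond_prob_def
  using assms by (intro divide_right_mono finite_measure.finite_measure_mono[OF assms(1)]) auto

lemma cond_prob_mono_condition:
  assumes "finite_measure M" and "C \<in> sets M" and "B \<in> sets M" and "A \<subseteq> C" and "C \<subseteq> B"
  shows "cond_prob M A B \<le> cond_prob M A C"
proof -
  interpret finite_measure M by fact
  have AC: "measure M A \<le> measure M C" and CB: "measure M C \<le> measure M B"
    using assms by (auto intro: finite_measure_mono)
  have "measure M A / measure M B \<le> measure M A / measure M C"
  proof (cases "measure M C = 0")
    case True
    then show ?thesis
      using AC measure_nonneg[of M A] by simp
  next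
    case False
    then have "0 < measure M C"
      using measure_nonneg[of M C] by linarith
    then show ?thesis
      using CB by (intro divide_left_mono) auto
  qed
  moreover have "A \<inter> B = A" "A \<inter> C = A"
    using assms(4,5) by auto
  ultimately show ?thesis
    by (simp add: cond_prob_def)
qed

lemma cond_prob_full:
  assumes "prob_space M" and "A \<in> sets M" and "B \<in> sets M"
    and "measure M A = 1" and "0 < measure M B"
  shows "cond_prob M A B = 1"
proof -
  interpret prob_space M by fact
  have "measure M (B \<inter> A) = measure M B"
    using assms by (intro measure_space_inter) (simp_all add: prob_space)
  then show ?thesis
    using assms(5) by (simp add: cond_prob_def Int_commute)
qed

lemma prob_weight_zero: "prob_weight w \<Longrightarrow> w 0 = 0"
  and prob_weight_one: "prob_weight w \<Longrightarrow> w 1 = 1"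
  by (simp_all add: prob_weight_def)

lemma prob_weight_mono:
  assumes "prob_weight w" and "0 \<le> a" and "a \<le> b" and "b \<le> 1"
  shows "w a \<le> w b"
proof -
  have "strict_mono_on {0..1} w"
    using assms(1) by (simp add: prob_weight_def)
  then show ?thesis
    by (rule strict_mono_on_leD) (use assms in auto)
qed

lemma nn_integral_prob_weight_mono:
  fixes a b :: "real \<Rightarrow> real"
  assumes "prob_weight w" and "\<And>y. 0 \<le> y \<Longrightarrow> 0 \<le> a y \<and> a y \<le> b y \<and> b y \<le> 1"
  shows "(\<integral>\<^sup>+ y\<in>{0..}. ennreal (w (a y)) \<partial>lborel) \<le> (\<integral>\<^sup>+ y\<in>{0..}. ennreal (w (b y)) \<partial>lborel)"
proof (rule nn_integral_mono)
  fix y :: real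
  show "ennreal (w (a y)) * indicator {0..} y \<le> ennreal (w (b y)) * indicator {0..} y"
  proof (cases "0 \<le> y")
    case True
    then have "w (a y) \<le> w (b y)"
      using assms(2)[OF True] by (intro prob_weight_mono[OF assms(1)]) auto
    then show ?thesis
      using True by (simp add: ennreal_leI)
  qed simp
qed

definition choquet_excess :: "'a measure \<Rightarrow> (real \<Rightarrow> real) \<Rightarrow> ('a \<Rightarrow> ereal) \<Rightarrow> real \<Rightarrow> 'a set \<Rightarrow> ennreal"
  where "choquet_excess M w X c B =
    (\<integral>\<^sup>+ y\<in>{0..}. ennreal (w (cond_prob M {x\<in>space M. X x - ereal c > ereal y} B)) \<partial>lborel)"

lemma choquet_excess_antimono_level:
  assumes "finite_measure M" and "prob_weight w" and [measurable]: "X \<in> borel_measurable M"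
    and "B \<in> sets M" and "c \<le> c'"
  shows "choquet_excess M w X c' B \<le> choquet_excess M w X c B"
  unfolding choquet_excess_def
proof (rule nn_integral_prob_weight_mono[OF assms(2)])
  fix y :: real
  let ?A' = "{x\<in>space M. X x - ereal c' > ereal y}" and ?A = "{x\<in>space M. X x - ereal c > ereal y}"
  have "?A' \<subseteq> ?A"
    using assms(5) by (auto simp: ereal_less_minus_iff intro: order.strict_trans1[rotated])
  then show "0 \<le> cond_prob M ?A' B \<and> cond_prob M ?A' B \<le> cond_prob M ?A B \<and> cond_prob M ?A B \<le> 1"
    using assms(1,4) by (auto intro: cond_prob_nonneg cond_prob_mono cond_prob_le_1)
qed

lemma choquet_excess_mono_condition:
  assumes "finite_measure M" and "prob_weight w" and [measurable]: "X \<in> borel_measurable M"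
    and "B \<in> sets M" and "{x\<in>space M. ereal c < X x} \<subseteq> B"
  shows "choquet_excess M w X c B \<le> choquet_excess M w X c {x\<in>space M. ereal c < X x}"
  unfolding choquet_excess_def
proof (rule nn_integral_prob_weight_mono[OF assms(2)])
  fix y :: real
  assume "0 \<le> y"
  let ?A = "{x\<in>space M. X x - ereal c > ereal y}" and ?C = "{x\<in>space M. ereal c < X x}"
  have "?A \<subseteq> ?C"
    using \<open>0 \<le> y\<close> by (auto simp: ereal_less_minus_iff intro: order.strict_trans1[rotated])
  then show "0 \<le> cond_prob M ?A B \<and> cond_prob M ?A B \<le> cond_prob M ?A ?C \<and> cond_prob M ?A ?C \<le> 1"
    using assms(1,4,5) by (auto intro: cond_prob_nonneg cond_prob_mono_condition cond_prob_le_1)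
qed

lemma choquet_excess_null_condition:
  assumes "prob_weight w" and "measure M B = 0"
  shows "choquet_excess M w X c B = 0"
  using assms by (simp add: choquet_excess_def cond_prob_def prob_weight_zero)

lemma choquet_excess_stopping_bound:
  fixes \<tau> :: "'a \<Rightarrow> ennreal" and T :: "real \<Rightarrow> real"
  defines "X \<equiv> \<lambda>x. payment_at T (\<tau> x)"
  assumes M: "finite_measure M" and w: "prob_weight w" and [measurable]: "\<tau> \<in> borel_measurable M"
    and T: "cumulative_payment T" and "0 \<le> s"
    and level_bound: "\<And>c. 0 \<le> c \<Longrightarrow> 0 < measure M {x\<in>space M. ereal c < X x} \<Longrightarrow>
      ennreal lam * choquet_excess M w X c {x\<in>space M. ereal c < X x} \<le> ennreal \<theta>"
  shows "ennreal lam * choquet_excess M w X (T s) {x\<in>space M. ennreal s < \<tau> x} \<le> ennreal \<theta>"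
proof -
  have mono: "mono_on {0..} T"
    by (rule cumulative_payment_mono[OF T])
  have [measurable]: "X \<in> borel_measurable M"
    unfolding X_def by (rule measurable_payment_at[OF mono]) measurable
  have "ennreal s < \<tau> x" if "ereal (T s) < X x" for x
  proof (rule ccontr)
    assume "\<not> ennreal s < \<tau> x"
    then have "X x \<le> ereal (T s)"
      unfolding X_def by (intro payment_at_le[OF mono \<open>0 \<le> s\<close>]) simp
    with that show False
      by simp
  qed
  then have "ennreal lam * choquet_excess M w X (T s) {x\<in>space M. ennreal s < \<tau> x}
      \<le> ennreal lam * choquet_excess M w X (T s) {x\<in>space M. ereal (T s) < X x}"
    by (intro mult_left_mono choquet_excess_mono_condition[OF M w]) auto
  also have "\<dots> \<le> ennreal \<theta>"
  proof (cases "0 < measure M {x\<in>space M. ereal (T s) < X x}")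
    case True
    moreover have "0 \<le> T s"
      using mono_onD[OF mono, of 0 s] \<open>0 \<le> s\<close> cumulative_payment_zero[OF T] by simp
    ultimately show ?thesis
      by (rule level_bound[rotated])
  next
    case False
    then show ?thesis
      using measure_nonneg[of M "{x\<in>space M. ereal (T s) < X x}"]
      by (simp add: choquet_excess_null_condition[OF w])
  qed
  finally show ?thesis .
qed

lemma cumulative_payment_level_crossing:
  assumes "cumulative_payment T" and "0 \<le> c" and "ereal c < payment_at T \<rho>"
  obtains t where "0 \<le> t" "T t \<le> c" "\<And>\<sigma>. ereal c < payment_at T \<sigma> \<longleftrightarrow> ennreal t < \<sigma>"
proof -
  have mono: "mono_on {0..} T"
    by (rule cumulative_payment_mono[OF assms(1)])
  obtain u\<^sub>0 where u\<^sub>0: "0 \<le> u\<^sub>0" "c < T u\<^sub>0"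
    using assms(3) by (rule payment_at_gtE)
  obtain t where t: "0 \<le> t" "T t \<le> c" "\<And>u. t < u \<Longrightarrow> c < T u"
    by (rule mono_left_continuous_crossing[OF mono cumulative_payment_tendsto_at_left[OF assms(1)] _ u\<^sub>0])
      (simp_all add: cumulative_payment_zero[OF assms(1)] assms(2))
  show ?thesis
    by (rule that[OF t(1,2) payment_at_gt_iff_crossing[OF mono t]])
qed

lemma choquet_excess_level_bound:
  fixes \<tau> :: "'a \<Rightarrow> ennreal" and T :: "real \<Rightarrow> real"
  defines "X \<equiv> \<lambda>x. payment_at T (\<tau> x)"
  assumes M: "finite_measure M" and w: "prob_weight w" and [measurable]: "\<tau> \<in> borel_measurable M"
    and T: "cumulative_payment T" and "0 \<le> c" and pos: "0 < measure M {x\<in>space M. ereal c < X x}"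
    and stopping_bound: "\<And>s. 0 \<le> s \<Longrightarrow> 0 < measure M {x\<in>space M. ennreal s < \<tau> x} \<Longrightarrow>
      ennreal lam * choquet_excess M w X (T s) {x\<in>space M. ennreal s < \<tau> x} \<le> ennreal \<theta>"
  shows "ennreal lam * choquet_excess M w X c {x\<in>space M. ereal c < X x} \<le> ennreal \<theta>"
proof -
  have [measurable]: "X \<in> borel_measurable M"
    unfolding X_def by (rule measurable_payment_at[OF cumulative_payment_mono[OF T]]) measurable
  obtain x where "ereal c < payment_at T (\<tau> x)"
    using pos by (force simp: X_def)
  then obtain t where t: "0 \<le> t" "T t \<le> c"
    and crossing: "\<And>\<sigma>. ereal c < payment_at T \<sigma> \<longleftrightarrow> ennreal t < \<sigma>"
    by (rule cumulative_payment_level_crossing[OF T \<open>0 \<le> c\<close>]) blast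
  have level_eq: "{x\<in>space M. ereal c < X x} = {x\<in>space M. ennreal t < \<tau> x}"
    using crossing by (simp add: X_def)
  have "ennreal lam * choquet_excess M w X c {x\<in>space M. ereal c < X x}
      \<le> ennreal lam * choquet_excess M w X (T t) {x\<in>space M. ennreal t < \<tau> x}"
    unfolding level_eq using t(2) by (intro mult_left_mono choquet_excess_antimono_level[OF M w]) auto
  also have "\<dots> \<le> ennreal \<theta>"
    using stopping_bound t(1) pos unfolding level_eq by blast
  finally show ?thesis .
qed

lemma DIR_compatible_iff_choquet_excess:
  assumes "prob_space M" and "prob_weight wp" and [measurable]: "\<tau> \<in> borel_measurable M"
    and "measure M {x\<in>space M. \<tau> x < \<infinity>} = 1"
  shows "DIR_compatible M \<theta> lam wp wm \<tau> T \<longleftrightarrow>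
    (\<forall>s\<ge>0. 0 < measure M {x\<in>space M. ennreal s < \<tau> x} \<longrightarrow>
       ennreal lam * choquet_excess M wm (\<lambda>x. payment_at T (\<tau> x)) (T s) {x\<in>space M. ennreal s < \<tau> x}
         \<le> ennreal \<theta>)"
proof -
  have "cond_prob M {x\<in>space M. \<tau> x < \<infinity>} {x\<in>space M. ennreal s < \<tau> x} = 1"
    if "0 < measure M {x\<in>space M. ennreal s < \<tau> x}" for s
    using assms(4) that by (intro cond_prob_full[OF assms(1)]) simp_all
  then show ?thesis
    unfolding DIR_compatible_def choquet_excess_def using prob_weight_one[OF assms(2)] by auto
qed

theorem lemma3:
  fixes M :: "'a measure" and \<tau> :: "'a \<Rightarrow> ennreal" and T :: "real \<Rightarrow> real"
    and \<theta> lam :: real and wp wm :: "real \<Rightarrow> real"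
  assumes "prob_space M" and "\<theta> > 0" and "lam > 0"
    and "prob_weight wp" and "prob_weight wm"
    and "pricing_stopping_time M \<tau>" and "cumulative_payment T"
    and "measure M {x\<in>space M. \<tau> x < \<infinity>} = 1"
  shows "DIR_compatible M \<theta> lam wp wm \<tau> T \<longleftrightarrow>
    (\<forall>s\<ge>0. measure M {x\<in>space M. payment_at T (\<tau> x) > ereal s} > 0 \<longrightarrow>
       ennreal lam * (\<integral>\<^sup>+ y\<in>{0..}. ennreal (wm (cond_prob M
             {x\<in>space M. payment_at T (\<tau> x) - ereal s > ereal y}
             {x\<in>space M. payment_at T (\<tau> x) > ereal s})) \<partial>lborel)
       \<le> ennreal \<theta>)"
proof -
  have \<tau>: "\<tau> \<in> borel_measurable M"
    using assms(6) by (simp add: pricing_stopping_time_def)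
  have M: "finite_measure M"
    using assms(1) by (rule prob_space.finite_measure)
  show ?thesis
    unfolding DIR_compatible_iff_choquet_excess[OF assms(1,4) \<tau> assms(8)]
    using choquet_excess_stopping_bound[OF M assms(5) \<tau> assms(7)]
      choquet_excess_level_bound[OF M assms(5) \<tau> assms(7)]
    by (auto simp: choquet_excess_def)
qed

end
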